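(* For all integers $n\ge 1$ and $k\ge 0$, the number of ordered (plane) trees with $n$ edges containing exactly $k$ nodes that are adjacent to a leaf equals \[\frac{1}{n+1}\binom{n+1}{2k+1}\binom{n+k}{k}.\] Consequently $C_n=\frac{1}{n+1}\sum_{k}\binom{n+1}{2k+1}\binom{n+k}{k}$.
   Context: In an ordered tree the vertices are partitioned into three classes: the root, the leaves (non-root vertices with no children), and the nodes (vertices that are neither the root nor a leaf). A node is adjacent to a leaf if at least one of its children is a leaf. $C_n$ denotes the $n$th Catalan number. *)

theory Defs
  imports Complex_Main
begin

datatype otree = Node "otree list"

fun edges :: "otree \<Rightarrow> nat" where
  "edges (Node ts) = length ts + sum_list (map edges ts)"

text \<open>Number of nodes adjacent to a leaf in the subtree rooted at a NON-root vertex
  (the vertex itself is counted if it is a node, i.e. has children, and some child is a leaf).\<close>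
fun adj_sub :: "otree \<Rightarrow> nat" where
  "adj_sub (Node ts) =
     (if ts \<noteq> [] \<and> (\<exists>c\<in>set ts. c = Node []) then 1 else 0) + sum_list (map adj_sub ts)"

text \<open>Number of nodes (non-root, non-leaf vertices) adjacent to a leaf in a tree; the root is excluded.\<close>
fun leaf_adj_nodes :: "otree \<Rightarrow> nat" where
  "leaf_adj_nodes (Node ts) = sum_list (map adj_sub ts)"

definition catalan :: "nat \<Rightarrow> nat" where
  "catalan n = ((2 * n) choose n) div (n + 1)"

end

theory Submission
  imports Defs
begin

(* Apart from the single vertex, an ordered tree either has a leaf as first child of its root,
   or it is assembled bijectively from three trees by adding two edges and one node adjacent
   to a leaf. So the generating function of trees by edges (x) and leaf-adjacent nodes (y)
   satisfies G = 1 + x G + x^2 y G^3. Forests of r trees then obey a recurrence in r, which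
   is also satisfied by R_3(r, k) * C(n + k + r - 1, n - 2 k), where R_p(r, k) =
   r / (p k + r) * C(p k + r, k) are the Raney numbers; induction along it gives the count,
   which for r = 1 is the stated formula. Splitting off the first child of the root
   instead gives G = 1 + x G^2 for trees counted by edges alone, whose forests are counted by R_2;
   for a single tree these are the Catalan numbers, and summing the refined count over k gives
   the identity. *)

abbreviation leaf :: otree where "leaf \<equiv> Node []"

fun children :: "otree \<Rightarrow> otree list" where
  "children (Node ts) = ts"

lemma Node_children [simp]: "Node (children t) = t"
  by (cases t) simp

lemma edges_via_children: "edges t = length (children t) + sum_list (map edges (children t))"
  by (cases t) simp

(* For children cs without a leaf, spine_split follows first children down to the first vertex
   having a leaf child. It returns that vertex's children l, and in w the lists of right siblings
   met on the way, separated by leaves; as these lists contain no leaf, w determines them. *)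
fun spine_split :: "otree list \<Rightarrow> otree list \<times> otree list" where
  "spine_split [] = ([], [])"
| "spine_split (Node cs # rest) =
     (if leaf \<in> set cs then (rest, cs)
      else case spine_split cs of (w, l) \<Rightarrow> (rest @ leaf # w, l))"

fun spine_join :: "otree list \<Rightarrow> otree list \<Rightarrow> otree list" where
  "spine_join [] l = [Node l]"
| "spine_join (x # w) l =
     (let j = spine_join w l in if x = leaf then [Node j] else hd j # x # tl j)"

lemma spine_join_not_Nil: "spine_join w l \<noteq> []"
  by (cases w) (simp_all add: Let_def)

lemma spine_join_leafless: "leaf \<notin> set w \<Longrightarrow> spine_join w l = Node l # w"
  by (induction w) auto

lemma spine_join_leafless_append:
  "leaf \<notin> set rest \<Longrightarrow> spine_join (rest @ leaf # w) l = Node (spine_join w l) # rest"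
  by (induction rest) auto

lemma leaf_notin_spine_join: "leaf \<in> set l \<Longrightarrow> leaf \<notin> set (spine_join w l)"
proof (induction w)
  case (Cons x w)
  then show ?case
    using spine_join_not_Nil[of w l] by (cases "spine_join w l") (auto simp: Let_def)
qed auto

lemma spine_split_Cons_Cons:
  "spine_split (t # x # rest) = (case spine_split (t # rest) of (w, l) \<Rightarrow> (x # w, l))"
  by (cases t) (auto split: prod.split)

lemma spine_split_spine_join: "leaf \<in> set l \<Longrightarrow> spine_split (spine_join w l) = (w, l)"
proof (induction w)
  case (Cons x w)
  obtain t j where j: "spine_join w l = t # j"
    using spine_join_not_Nil by (metis list.exhaust)
  show ?case
  proof (cases "x = leaf")
    case True
    then show ?thesis
      using Cons leaf_notin_spine_join[OF Cons.prems, of w] j by auto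
  next
    case False
    then show ?thesis
      using Cons j by (auto simp: spine_split_Cons_Cons)
  qed
qed auto

lemma spine_join_spine_split:
  "cs \<noteq> [] \<Longrightarrow> leaf \<notin> set cs \<Longrightarrow> spine_split cs = (w, l) \<Longrightarrow>
    leaf \<in> set l \<and> spine_join w l = cs"
proof (induction cs arbitrary: w rule: spine_split.induct)
  case (2 cs rest)
  then show ?case
    by (cases "cs = []")
      (auto simp: spine_join_leafless spine_join_leafless_append split: if_splits prod.splits)
qed simp

lemma edges_spine_join:
  "leaf \<in> set l \<Longrightarrow> edges (Node (spine_join w l)) = edges (Node w) + edges (Node l) + 1"
proof (induction w)
  case (Cons x w)
  then show ?case
    using spine_join_not_Nil[of w l] by (cases "spine_join w l") (auto simp: Let_def)
qed simp

lemma leaf_adj_nodes_spine_join: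
  "leaf \<in> set l \<Longrightarrow>
    leaf_adj_nodes (Node (spine_join w l)) = leaf_adj_nodes (Node w) + leaf_adj_nodes (Node l) + 1"
proof (induction w)
  case (Cons x w)
  then show ?case
    using spine_join_not_Nil[of w l] leaf_notin_spine_join[OF Cons.prems, of w]
    by (cases "spine_join w l") (auto simp: Let_def)
qed auto

lemma takeWhile_dropWhile_first_leaf [simp]:
  "leaf \<notin> set as \<Longrightarrow>
    takeWhile (\<lambda>t. t \<noteq> leaf) (as @ leaf # bs) = as \<and>
    tl (dropWhile (\<lambda>t. t \<noteq> leaf) (as @ leaf # bs)) = bs"
  by (induction as) auto

datatype tree_shape = Single_Vertex | Pendant_Leaf otree | Leaf_Node otree otree otree

(* In the last case the first child c of the root is a node. If c has a leaf child, its children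
   are cut at the first leaf into p (without leaf child) and q; otherwise spine_split yields p
   (with a leaf child) and q. Either way exactly one node adjacent to a leaf disappears. *)
fun shape :: "otree \<Rightarrow> tree_shape" where
  "shape (Node []) = Single_Vertex"
| "shape (Node (Node cs # rest)) =
     (if cs = [] then Pendant_Leaf (Node rest)
      else if leaf \<in> set cs
      then Leaf_Node (Node (takeWhile (\<lambda>t. t \<noteq> leaf) cs))
             (Node (tl (dropWhile (\<lambda>t. t \<noteq> leaf) cs))) (Node rest)
      else case spine_split cs of (w, l) \<Rightarrow> Leaf_Node (Node l) (Node w) (Node rest))"

fun assemble :: "tree_shape \<Rightarrow> otree" where
  "assemble Single_Vertex = leaf"
| "assemble (Pendant_Leaf t) = Node (leaf # children t)"
| "assemble (Leaf_Node p q s) =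
     Node (Node (if leaf \<in> set (children p) then spine_join (children q) (children p)
                 else children p @ leaf # children q) # children s)"

declare assemble.simps [simp del]

lemma assemble_shape: "assemble (shape t) = t"
proof (induction t rule: shape.induct)
  case (2 cs rest)
  show ?case
  proof (cases "leaf \<in> set cs")
    case True
    then obtain as bs where "cs = as @ leaf # bs" "leaf \<notin> set as"
      using split_list_first by metis
    then show ?thesis by (auto simp: assemble.simps)
  next
    case False
    then show ?thesis
      using spine_join_spine_split[of cs] by (auto simp: assemble.simps split: prod.split)
  qed
qed (simp_all add: assemble.simps)

lemma shape_assemble: "shape (assemble d) = d"
proof (cases d)
  case (Leaf_Node p q s)
  then show ?thesis
    using spine_join_not_Nil[of "children q" "children p"]
      leaf_notin_spine_join[of "children p" "children q"]
      spine_split_spine_join[of "children p" "children q"]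
    by (cases "spine_join (children q) (children p)") (auto simp: assemble.simps split: prod.split)
qed (simp_all add: assemble.simps)

lemma tree_shape_cases:
  obtains "t = leaf"
  | u where "t = assemble (Pendant_Leaf u)"
  | p q s where "t = assemble (Leaf_Node p q s)"
  using assemble_shape[of t] by (cases "shape t") (auto simp: assemble.simps)

lemma edges_assemble:
  "edges (assemble (Pendant_Leaf t)) = edges t + 1"
  "edges (assemble (Leaf_Node p q s)) = edges p + edges q + edges s + 2"
proof -
  obtain ts ps qs ss where "t = Node ts" "p = Node ps" "q = Node qs" "s = Node ss"
    by (metis Node_children)
  then show "edges (assemble (Pendant_Leaf t)) = edges t + 1"
    and "edges (assemble (Leaf_Node p q s)) = edges p + edges q + edges s + 2"
    using edges_spine_join[of ps qs] by (auto simp: assemble.simps)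
qed

lemma leaf_adj_nodes_assemble:
  "leaf_adj_nodes (assemble (Pendant_Leaf t)) = leaf_adj_nodes t"
  "leaf_adj_nodes (assemble (Leaf_Node p q s)) =
     leaf_adj_nodes p + leaf_adj_nodes q + leaf_adj_nodes s + 1"
proof -
  obtain ts ps qs ss where "t = Node ts" "p = Node ps" "q = Node qs" "s = Node ss"
    by (metis Node_children)
  then show "leaf_adj_nodes (assemble (Pendant_Leaf t)) = leaf_adj_nodes t"
    and "leaf_adj_nodes (assemble (Leaf_Node p q s)) =
      leaf_adj_nodes p + leaf_adj_nodes q + leaf_adj_nodes s + 1"
    using leaf_adj_nodes_spine_join[of ps qs] leaf_notin_spine_join[of ps qs]
    by (auto simp: assemble.simps)
qed

lemma finite_edges_le: "finite {t. edges t \<le> n}"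
proof (induction n)
  case 0
  have "{t. edges t \<le> 0} = {leaf}"
    by (auto elim: edges.elims)
  then show ?case by simp
next
  case (Suc n)
  have "{t. edges t \<le> Suc n} \<subseteq> Node ` {ts. set ts \<subseteq> {t. edges t \<le> n} \<and> length ts \<le> Suc n}"
  proof
    fix t assume "t \<in> {t. edges t \<le> Suc n}"
    then obtain ts where t: "t = Node ts" and size: "length ts + sum_list (map edges ts) \<le> Suc n"
      by (cases t) auto
    have "edges u \<le> n" if "u \<in> set ts" for u
      using that size member_le_sum_list[of "edges u" "map edges ts"] by (cases ts) auto
    then show "t \<in> Node ` {ts. set ts \<subseteq> {t. edges t \<le> n} \<and> length ts \<le> Suc n}"
      using t size by auto
  qed
  then show ?case
    using finite_lists_length_le[OF Suc.IH] finite_subset by blast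
qed

definition forests :: "nat \<Rightarrow> nat \<Rightarrow> otree list set" where
  "forests r n = {ts. length ts = r \<and> sum_list (map edges ts) = n}"

definition leaf_adj_forests :: "nat \<Rightarrow> nat \<Rightarrow> nat \<Rightarrow> otree list set" where
  "leaf_adj_forests r n k = {ts \<in> forests r n. sum_list (map leaf_adj_nodes ts) = k}"

lemma finite_forests: "finite (forests r n)"
proof (rule finite_subset)
  show "forests r n \<subseteq> {ts. set ts \<subseteq> {t. edges t \<le> n} \<and> length ts = r}"
    by (auto simp: forests_def member_le_sum_list)
qed (rule finite_lists_length_eq[OF finite_edges_le])

lemma finite_leaf_adj_forests: "finite (leaf_adj_forests r n k)"
  using finite_forests by (simp add: leaf_adj_forests_def)

lemma card_forests_one: "card (forests 1 n) = card {t. edges t = n}"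
proof -
  have "forests 1 n = (\<lambda>t. [t]) ` {t. edges t = n}"
    by (auto simp: forests_def length_Suc_conv)
  then show ?thesis by (simp add: card_image inj_on_def)
qed

lemma card_leaf_adj_forests_one:
  "card (leaf_adj_forests 1 n k) = card {t. edges t = n \<and> leaf_adj_nodes t = k}"
proof -
  have "leaf_adj_forests 1 n k = (\<lambda>t. [t]) ` {t. edges t = n \<and> leaf_adj_nodes t = k}"
    by (auto simp: leaf_adj_forests_def forests_def length_Suc_conv)
  then show ?thesis by (simp add: card_image inj_on_def)
qed

fun decompose_forest :: "otree list \<Rightarrow> otree list + otree list" where
  "decompose_forest (Node (c # cs) # ts) = Inr (c # Node cs # ts)"
| "decompose_forest ts = Inl (tl ts)"

fun compose_forest :: "otree list + otree list \<Rightarrow> otree list" where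
  "compose_forest (Inl ts) = leaf # ts"
| "compose_forest (Inr ts) = Node (hd ts # children (hd (tl ts))) # tl (tl ts)"

lemma bij_betw_decompose_forest:
  "bij_betw decompose_forest (forests (Suc r) n)
     (forests r n <+> (if 1 \<le> n then forests (r + 2) (n - 1) else {}))"
  (is "bij_betw _ ?A ?B")
proof (rule bij_betw_byWitness[where f' = compose_forest])
  show "\<forall>ts \<in> ?A. compose_forest (decompose_forest ts) = ts"
  proof
    fix ts assume "ts \<in> ?A"
    then obtain us rest where "ts = Node us # rest"
      by (auto simp: forests_def length_Suc_conv) (metis Node_children)
    then show "compose_forest (decompose_forest ts) = ts" by (cases us) auto
  qed
  show "\<forall>x \<in> ?B. decompose_forest (compose_forest x) = x"
    by (auto simp: forests_def numeral_2_eq_2 length_Suc_conv split: if_splits)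
  show "decompose_forest ` ?A \<subseteq> ?B"
  proof (rule image_subsetI)
    fix ts assume "ts \<in> ?A"
    then obtain us rest where "ts = Node us # rest" "length rest = r"
        "length us + sum_list (map edges us) + sum_list (map edges rest) = n"
      by (auto simp: forests_def length_Suc_conv) (metis Node_children edges.simps)
    then show "decompose_forest ts \<in> ?B"
      by (cases us) (auto simp: forests_def)
  qed
  show "compose_forest ` ?B \<subseteq> ?A"
    by (auto simp: forests_def numeral_2_eq_2 length_Suc_conv edges_via_children split: if_splits)
qed

lemma card_forests_Suc:
  "card (forests (Suc r) n)
     = card (forests r n) + (if 1 \<le> n then card (forests (r + 2) (n - 1)) else 0)"
  using bij_betw_same_card[OF bij_betw_decompose_forest] by (simp add: card_Plus finite_forests)

fun decompose_forest_shape :: "otree list \<Rightarrow> otree list + otree list + otree list" where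
  "decompose_forest_shape (t # ts) =
     (case shape t of
        Single_Vertex \<Rightarrow> Inl ts
      | Pendant_Leaf u \<Rightarrow> Inr (Inl (u # ts))
      | Leaf_Node p q s \<Rightarrow> Inr (Inr (p # q # s # ts)))"
| "decompose_forest_shape [] = Inl []"

fun compose_forest_shape :: "otree list + otree list + otree list \<Rightarrow> otree list" where
  "compose_forest_shape (Inl ts) = leaf # ts"
| "compose_forest_shape (Inr (Inl ts)) = assemble (Pendant_Leaf (hd ts)) # tl ts"
| "compose_forest_shape (Inr (Inr ts)) = assemble (Leaf_Node (ts ! 0) (ts ! 1) (ts ! 2)) # drop 3 ts"

lemma bij_betw_decompose_forest_shape:
  "bij_betw decompose_forest_shape (leaf_adj_forests (Suc r) n k)
     (leaf_adj_forests r n k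
      <+> (if 1 \<le> n then leaf_adj_forests (Suc r) (n - 1) k else {})
      <+> (if 2 \<le> n \<and> 1 \<le> k then leaf_adj_forests (r + 3) (n - 2) (k - 1) else {}))"
  (is "bij_betw _ ?A ?B")
proof (rule bij_betw_byWitness[where f' = compose_forest_shape])
  have nonempty: "ts \<in> ?A \<Longrightarrow> \<exists>t us. ts = t # us" for ts
    by (auto simp: leaf_adj_forests_def forests_def length_Suc_conv)
  show "\<forall>ts \<in> ?A. compose_forest_shape (decompose_forest_shape ts) = ts"
  proof
    fix ts assume "ts \<in> ?A"
    with nonempty obtain t us where ts: "ts = t # us" by blast
    show "compose_forest_shape (decompose_forest_shape ts) = ts"
      unfolding ts by (cases t rule: tree_shape_cases) (auto simp: shape_assemble)
  qed
  show "\<forall>x \<in> ?B. decompose_forest_shape (compose_forest_shape x) = x"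
    by (auto simp: leaf_adj_forests_def forests_def numeral_3_eq_3 length_Suc_conv shape_assemble
        split: if_splits)
  show "decompose_forest_shape ` ?A \<subseteq> ?B"
  proof (rule image_subsetI)
    fix ts assume "ts \<in> ?A"
    with nonempty obtain t us where ts: "ts = t # us" by blast
    show "decompose_forest_shape ts \<in> ?B"
      using \<open>ts \<in> ?A\<close> unfolding ts
      by (cases t rule: tree_shape_cases)
        (auto simp: leaf_adj_forests_def forests_def shape_assemble edges_assemble
          leaf_adj_nodes_assemble)
  qed
  show "compose_forest_shape ` ?B \<subseteq> ?A"
    by (auto simp: leaf_adj_forests_def forests_def numeral_3_eq_3 length_Suc_conv
        edges_assemble leaf_adj_nodes_assemble simp del: sum_list_eq_0_iff split: if_splits)
qed

lemma card_leaf_adj_forests_Suc: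
  "card (leaf_adj_forests (Suc r) n k) = card (leaf_adj_forests r n k)
     + (if 1 \<le> n then card (leaf_adj_forests (Suc r) (n - 1) k) else 0)
     + (if 2 \<le> n \<and> 1 \<le> k then card (leaf_adj_forests (r + 3) (n - 2) (k - 1)) else 0)"
  using bij_betw_same_card[OF bij_betw_decompose_forest_shape]
  by (simp add: card_Plus finite_leaf_adj_forests)

(* The case split on r avoids the junk value 0 / 0 = 0 at r = k = 0. *)
definition raney :: "nat \<Rightarrow> nat \<Rightarrow> nat \<Rightarrow> real" where
  "raney p r k =
     (if r = 0 then (if k = 0 then 1 else 0)
      else real r / real (p * k + r) * real ((p * k + r) choose k))"

lemma raney_0_right [simp]: "raney p r 0 = 1"
  by (simp add: raney_def)

lemma raney_Suc_Suc:
  assumes "1 \<le> p"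
  shows "raney p (Suc t) (Suc j) = raney p t (Suc j) + raney p (t + p) j"
proof -
  define M where "M = p * Suc j + t"
  define c where "c = real (Suc M choose Suc j)"
  have "Suc j \<le> M"
    using mult_le_mono1[OF assms, of "Suc j"] by (simp add: M_def)
  then have "real M > 0"
    by simp
  have "real (Suc M) * real (M choose Suc j) = real (Suc M - Suc j) * c"
    unfolding c_def of_nat_mult[symmetric] binomial_absorb_comp[of "Suc M" "Suc j"] by simp
  then have upper: "real (M choose Suc j) = (real M - real j) * c / real (Suc M)"
    using \<open>Suc j \<le> M\<close> by (simp add: of_nat_diff field_simps)
  have "real (Suc M) * real (M choose j) = real (Suc j) * c"
    unfolding c_def of_nat_mult[symmetric] Suc_times_binomial[of j M] by simp
  then have lower: "real (M choose j) = real (Suc j) * c / real (Suc M)"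
    by (simp add: field_simps)
  have key: "real t * (real M - real j) + (real t + real p) * (real j + 1) = (real t + 1) * real M"
    by (simp add: M_def algebra_simps)
  have "raney p t (Suc j) + raney p (t + p) j
      = real t / real M * real (M choose Suc j) + real (t + p) / real M * real (M choose j)"
    using assms by (simp add: raney_def M_def algebra_simps)
  also have "\<dots> = c / (real M * real (Suc M))
      * (real t * (real M - real j) + (real t + real p) * (real j + 1))"
    using \<open>real M > 0\<close> unfolding upper lower by (simp add: divide_simps) (simp add: algebra_simps)
  also have "\<dots> = real (Suc t) / real (Suc M) * c"
    using \<open>real M > 0\<close> unfolding key by (simp add: divide_simps)
  also have "\<dots> = raney p (Suc t) (Suc j)"
    by (simp add: raney_def c_def M_def)
  finally show ?thesis ..
qed

lemma raney_Suc:
  "1 \<le> p \<Longrightarrow> raney p (Suc t) k = raney p t k + (if 1 \<le> k then raney p (t + p) (k - 1) else 0)"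
  using raney_Suc_Suc[of p t "k - 1"] by (cases k) auto

lemma card_forests: "real (card (forests r n)) = raney 2 r n"
proof (induction "2 * n + r" arbitrary: r n rule: less_induct)
  case less
  show ?case
  proof (cases r)
    case 0
    then have "forests r n = (if n = 0 then {[]} else {})"
      by (auto simp: forests_def)
    with 0 show ?thesis by (simp add: raney_def)
  next
    case (Suc s)
    have "real (card (forests s n)) = raney 2 s n"
      by (rule less) (simp add: Suc)
    moreover have "real (card (forests (s + 2) (n - 1))) = raney 2 (s + 2) (n - 1)" if "1 \<le> n"
      by (rule less) (use that Suc in simp)
    ultimately show ?thesis
      unfolding Suc card_forests_Suc raney_Suc[OF one_le_numeral] by simp
  qed
qed

(* The coefficient of x^n y^k in G^r for G = 1 + x G + x^2 y G^3. At r = 0 the truncated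
   subtraction in n + k + r - 1 still gives the right value. *)
definition leaf_adj_forest_count :: "nat \<Rightarrow> nat \<Rightarrow> nat \<Rightarrow> real" where
  "leaf_adj_forest_count r n k =
     (if 2 * k \<le> n then raney 3 r k * real ((n + k + r - 1) choose (n - 2 * k)) else 0)"

lemma leaf_adj_forest_count_0: "leaf_adj_forest_count 0 n k = (if n = 0 \<and> k = 0 then 1 else 0)"
  by (cases k) (simp_all add: leaf_adj_forest_count_def raney_def)

lemma leaf_adj_forest_count_Suc:
  "leaf_adj_forest_count (Suc s) n k = leaf_adj_forest_count s n k
     + (if 1 \<le> n then leaf_adj_forest_count (Suc s) (n - 1) k else 0)
     + (if 2 \<le> n \<and> 1 \<le> k then leaf_adj_forest_count (s + 3) (n - 2) (k - 1) else 0)"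
proof (cases "2 * k \<le> n")
  case False
  then show ?thesis by (auto simp: leaf_adj_forest_count_def)
next
  case True
  then obtain m where n: "n = m + 2 * k"
    by (metis le_add_diff_inverse2)
  define N where "N = m + 3 * k + s"
  have pascal: "real (N choose m)
      = real ((N - 1) choose m) + (if 1 \<le> m then real ((N - 1) choose (m - 1)) else 0)"
    by (cases m) (auto simp: N_def)
  have "leaf_adj_forest_count (Suc s) n k = raney 3 (Suc s) k * real (N choose m)"
    by (simp add: leaf_adj_forest_count_def n N_def algebra_simps)
  moreover have "leaf_adj_forest_count s n k = raney 3 s k * real ((N - 1) choose m)"
    by (simp add: leaf_adj_forest_count_def n N_def algebra_simps)
  moreover have "(if 1 \<le> n then leaf_adj_forest_count (Suc s) (n - 1) k else 0)
      = (if 1 \<le> m then raney 3 (Suc s) k * real ((N - 1) choose (m - 1)) else 0)"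
    by (cases m) (auto simp: leaf_adj_forest_count_def n N_def algebra_simps)
  moreover have "(if 2 \<le> n \<and> 1 \<le> k then leaf_adj_forest_count (s + 3) (n - 2) (k - 1) else 0)
      = (if 1 \<le> k then raney 3 (s + 3) (k - 1) * real ((N - 1) choose m) else 0)"
    by (cases k) (auto simp: leaf_adj_forest_count_def n N_def algebra_simps)
  ultimately show ?thesis
    unfolding pascal raney_Suc[OF one_le_numeral] by (simp add: algebra_simps)
qed

lemma card_leaf_adj_forests: "real (card (leaf_adj_forests r n k)) = leaf_adj_forest_count r n k"
proof (induction "2 * n + r" arbitrary: r n k rule: less_induct)
  case less
  show ?case
  proof (cases r)
    case 0
    then have "leaf_adj_forests r n k = (if n = 0 \<and> k = 0 then {[]} else {})"
      by (auto simp: leaf_adj_forests_def forests_def simp del: sum_list_eq_0_iff)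
    with 0 show ?thesis by (simp add: leaf_adj_forest_count_0)
  next
    case (Suc s)
    have "real (card (leaf_adj_forests s n k)) = leaf_adj_forest_count s n k"
      by (rule less) (simp add: Suc)
    moreover have "real (card (leaf_adj_forests (Suc s) (n - 1) k))
        = leaf_adj_forest_count (Suc s) (n - 1) k" if "1 \<le> n"
      by (rule less) (use that Suc in simp)
    moreover have "real (card (leaf_adj_forests (s + 3) (n - 2) (k - 1)))
        = leaf_adj_forest_count (s + 3) (n - 2) (k - 1)" if "2 \<le> n"
      by (rule less) (use that Suc in simp)
    ultimately show ?thesis
      unfolding Suc card_leaf_adj_forests_Suc[of s n k] leaf_adj_forest_count_Suc[of s n k] by simp
  qed
qed

lemma leaf_adj_forest_count_one:
  "leaf_adj_forest_count 1 n k
     = 1 / real (n + 1) * real ((n + 1) choose (2 * k + 1)) * real ((n + k) choose k)"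
proof (cases "2 * k \<le> n")
  case False
  then show ?thesis by (simp add: leaf_adj_forest_count_def binomial_eq_0)
next
  case True
  then obtain m where n: "n = m + 2 * k"
    by (metis le_add_diff_inverse2)
  have "(2 * k + 1) * ((3 * k + 1) choose k) = (3 * k + 1) * ((3 * k) choose k)"
    using binomial_absorb_comp[of "3 * k + 1" k] by simp
  then have raney_3_1: "raney 3 1 k = real ((3 * k) choose k) / real (2 * k + 1)"
    unfolding raney_def by (simp add: field_simps flip: of_nat_mult)
  have "(2 * k + 1) * ((m + 2 * k + 1) choose (2 * k + 1))
      = (m + 2 * k + 1) * ((m + 2 * k) choose (2 * k))"
    using Suc_times_binomial[of "2 * k" "m + 2 * k"] by simp
  then have absorb: "1 / real (n + 1) * real ((n + 1) choose (2 * k + 1))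
      = real ((m + 2 * k) choose (2 * k)) / real (2 * k + 1)"
    unfolding n by (simp add: field_simps flip: of_nat_mult)
  have "((m + 3 * k) choose (3 * k)) * ((3 * k) choose k)
      = ((m + 3 * k) choose k) * ((m + 2 * k) choose (2 * k))"
    using choose_mult[of k "3 * k" "m + 3 * k"] by (simp add: add.commute)
  then have "real ((3 * k) choose k) * real ((m + 3 * k) choose m)
      = real ((m + 2 * k) choose (2 * k)) * real ((m + 3 * k) choose k)"
    using binomial_symmetric[of m "m + 3 * k"] by (simp add: algebra_simps flip: of_nat_mult)
  then show ?thesis
    unfolding leaf_adj_forest_count_def absorb raney_3_1 using True by (simp add: n field_simps)
qed

lemma card_trees_eq_catalan: "card {t. edges t = n} = catalan n"
proof -
  have "(2 * n + 1) * ((2 * n) choose n) = (n + 1) * ((2 * n + 1) choose n)"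
    using Suc_times_binomial_eq[of "2 * n" n] binomial_symmetric[of n "2 * n + 1"] by simp
  then have "real ((2 * n) choose n) = real (n + 1) * raney 2 1 n"
    unfolding raney_def by (simp add: field_simps flip: of_nat_mult)
  also have "\<dots> = real ((n + 1) * card {t. edges t = n})"
    using card_forests[of 1 n] unfolding card_forests_one by (simp add: algebra_simps)
  finally have "(2 * n) choose n = (n + 1) * card {t. edges t = n}"
    by (simp only: of_nat_eq_iff)
  then show ?thesis
    by (simp add: catalan_def del: mult_Suc)
qed

lemma adj_sub_le_edges: "adj_sub t \<le> edges t"
proof (induction t)
  case (Node ts)
  have "sum_list (map adj_sub ts) \<le> sum_list (map edges ts)"
    using Node by (intro sum_list_mono) auto
  then show ?case by (cases ts) auto
qed

lemma leaf_adj_nodes_le_edges: "leaf_adj_nodes t \<le> edges t"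
proof (cases t)
  case (Node ts)
  have "sum_list (map adj_sub ts) \<le> sum_list (map edges ts)"
    using adj_sub_le_edges by (intro sum_list_mono)
  then show ?thesis using Node by simp
qed

lemma card_trees_sum_leaf_adj_nodes:
  "card {t. edges t = n} = (\<Sum>k\<le>n. card {t. edges t = n \<and> leaf_adj_nodes t = k})"
proof -
  have "{t. edges t = n} = (\<Union>k\<le>n. {t. edges t = n \<and> leaf_adj_nodes t = k})"
    using leaf_adj_nodes_le_edges by fastforce
  moreover have "finite {t. edges t = n \<and> leaf_adj_nodes t = k}" for k
    using finite_edges_le[of n] by (rule rev_finite_subset) auto
  then have "card (\<Union>k\<le>n. {t. edges t = n \<and> leaf_adj_nodes t = k})
      = (\<Sum>k\<le>n. card {t. edges t = n \<and> leaf_adj_nodes t = k})"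
    by (intro card_UN_disjoint) auto
  ultimately show ?thesis
    by simp
qed

theorem mainTheorem2:
  fixes n k :: nat
  assumes "n \<ge> 1"
  shows "real (card {t. edges t = n \<and> leaf_adj_nodes t = k})
           = 1 / real (n + 1) * real ((n + 1) choose (2 * k + 1)) * real ((n + k) choose k)
       \<and> real (catalan n)
           = 1 / real (n + 1) * (\<Sum>j\<le>n. real ((n + 1) choose (2 * j + 1)) * real ((n + j) choose j))"
proof
  have count: "real (card {t. edges t = n \<and> leaf_adj_nodes t = j})
      = 1 / real (n + 1) * real ((n + 1) choose (2 * j + 1)) * real ((n + j) choose j)" for j
    using card_leaf_adj_forests[of 1 n j]
    unfolding card_leaf_adj_forests_one leaf_adj_forest_count_one .
  then show "real (card {t. edges t = n \<and> leaf_adj_nodes t = k})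
      = 1 / real (n + 1) * real ((n + 1) choose (2 * k + 1)) * real ((n + k) choose k)" .
  have "real (catalan n) = (\<Sum>j\<le>n. real (card {t. edges t = n \<and> leaf_adj_nodes t = j}))"
    by (simp flip: card_trees_eq_catalan add: card_trees_sum_leaf_adj_nodes)
  also have "\<dots> = 1 / real (n + 1)
      * (\<Sum>j\<le>n. real ((n + 1) choose (2 * j + 1)) * real ((n + j) choose j))"
    by (simp add: count sum_distrib_left mult.assoc)
  finally show "real (catalan n)
      = 1 / real (n + 1) * (\<Sum>j\<le>n. real ((n + 1) choose (2 * j + 1)) * real ((n + j) choose j))" .
qed

end
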